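(* Let $r\ge 2$ and $(\boldsymbol\lambda,\mathbf{s})\in\mathcal{A}_e^r$. Then the map $\eta\circ\Psi_r$ restricts to a bijection from the $\approx_e$-equivalence class of $(\boldsymbol\lambda,\mathbf{s})$ in $\mathcal{A}_e^r$ onto the $\approx_r$-equivalence class of $\eta(\Psi_r(\boldsymbol\lambda,\mathbf{s}))$ in $\mathcal{A}_r^e$.
   Context: Fix an integer $e\ge 2$. A partition is a weakly decreasing sequence $\lambda=(\lambda_1,\lambda_2,\dots)$ of non-negative integers with finite sum $|\lambda|$; $\Lambda$ denotes the set of partitions and $\Lambda^{(m)}$ the set of $m$-multipartitions, i.e. $m$-tuples $\boldsymbol\lambda=(\lambda^{(1)},\dots,\lambda^{(m)})$ of partitions, with $|\boldsymbol\lambda|=\sum_k|\lambda^{(k)}|$. A $\beta$-set is a subset $B\subseteq\mathbb{Z}$ containing all sufficiently small integers and no sufficiently large ones. For $\lambda\in\Lambda$ and $s\in\mathbb{Z}$ set $B_s(\lambda)=\{\lambda_i-i+s : i\ge 1\}$; every $\beta$-set equals $B_s(\lambda)$ for a unique pair $(\lambda,s)$. For $N\ge 2$ let $\mathcal{A}_N=\Lambda\times\mathbb{Z}$ (abacus configurations with $N$ runners) and $\mathcal{A}_N^m=\Lambda^{(m)}\times\mathbb{Z}^m$, where $(\boldsymbol\lambda,\mathbf{s})$ is identified with the $m$-tuple of $\beta$-sets $(B_{s_1}(\lambda^{(1)}),\dots,B_{s_m}(\lambda^{(m)}))$. Blocks: for $(\boldsymbol\lambda,\mathbf{s})\in\mathcal{A}_N^m$,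 its $N$-residue multiset is the multiset of the values $s_k+y-x \bmod N$ over all nodes $(x,y,k)$ with $x\ge1$, $1\le y\le\lambda^{(k)}_x$, $1\le k\le m$. Define $(\boldsymbol\lambda,\mathbf{s})\approx_N(\boldsymbol\mu,\mathbf{s}')$ iff $\mathbf{s}=\mathbf{s}'$, $|\boldsymbol\lambda|=|\boldsymbol\mu|$ and the $N$-residue multisets coincide. Its equivalence classes are called blocks. The map $\eta$: for $(\lambda,s)\in\mathcal{A}_e$ with $B=B_s(\lambda)$ and $0\le i<e$, the set $C_i=\{(b-i)/e : b\in B,\ b\equiv i \bmod e\}$ is a $\beta$-set, so $C_i=B_{t_i}(\rho_i)$ for a unique $(\rho_i,t_i)\in\Lambda\times\mathbb{Z}$; set $\eta(\lambda,s)=((\rho_0,\dots,\rho_{e-1}),(t_0,\dots,t_{e-1}))\in\Lambda^{(e)}\times\mathbb{Z}^e$, which we also regard as an element of $\mathcal{A}_r^e$. Uglov's map: for $1\le k\le r$ define $\psi_k:\mathbb{Z}\to\mathbb{Z}$ by $\psi_k(ae+i)=((a+1)r-k)e+i$ for $a\in\mathbb{Z}$, $0\le i<e$. For $(\boldsymbol\lambda,\mathbf{s})\in\mathcal{A}_e^r$ the set $B=\bigsqcup_{k=1}^r\psi_k(B_{s_k}(\lambda^{(k)}))$ is a $\beta$-set, and $\Psi_r(\boldsymbol\lambda,\mathbf{s})$ is the unique $(\tilde\lambda,\tilde s)\in\mathcal{A}_e$ with $B_{\tilde s}(\tilde\lambda)=B$. $\Psi_r:\mathcal{A}_e^r\to\mathcal{A}_e$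 is a bijection; $\Phi_r=\Psi_r^{-1}$. *)

theory Defs
  imports "HOL-Library.Multiset"
begin

definition is_partition :: "nat list \<Rightarrow> bool" where
  "is_partition xs \<longleftrightarrow> sorted_wrt (\<ge>) xs \<and> (\<forall>x\<in>set xs. 0 < x)"

definition part :: "nat list \<Rightarrow> nat \<Rightarrow> nat" where
  "part xs i = (if 1 \<le> i \<and> i \<le> length xs then xs ! (i - 1) else 0)"

definition psize :: "nat list \<Rightarrow> nat" where
  "psize xs = sum_list xs"

definition beta_set :: "int \<Rightarrow> nat list \<Rightarrow> int set" where
  "beta_set s xs = {int (part xs i) - int i + s | i. 1 \<le> i}"

definition is_beta_set :: "int set \<Rightarrow> bool" where
  "is_beta_set B \<longleftrightarrow> (\<exists>n. \<forall>x\<le>n. x \<in> B) \<and> (\<exists>n. \<forall>x\<ge>n. x \<notin> B)"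

definition from_beta :: "int set \<Rightarrow> nat list \<times> int" where
  "from_beta B = (THE p. is_partition (fst p) \<and> beta_set (snd p) (fst p) = B)"

text \<open>A_N = Lambda x Z (as a set, independent of N).\<close>
definition config1 :: "(nat list \<times> int) set" where
  "config1 = {(xs, s). is_partition xs}"

text \<open>A_N^m = Lambda^(m) x Z^m; m-tuples as lists of length m (component k is list index k-1).\<close>
definition configm :: "nat \<Rightarrow> (nat list list \<times> int list) set" where
  "configm m = {(ls, ss). length ls = m \<and> length ss = m \<and> (\<forall>l\<in>set ls. is_partition l)}"

definition msize :: "nat list list \<Rightarrow> nat" where
  "msize ls = (\<Sum>l\<leftarrow>ls. psize l)"

text \<open>Nodes (x, y, k) with k a 0-based component index.\<close>
definition nodes :: "nat list list \<Rightarrow> (nat \<times> nat \<times> nat) set" where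
  "nodes ls = {(x, y, k). k < length ls \<and> 1 \<le> x \<and> 1 \<le> y \<and> y \<le> part (ls ! k) x}"

definition residues :: "nat \<Rightarrow> nat list list \<times> int list \<Rightarrow> int multiset" where
  "residues N c = image_mset (\<lambda>(x, y, k). (snd c ! k + int y - int x) mod int N)
                              (mset_set (nodes (fst c)))"

definition block_rel :: "nat \<Rightarrow> nat list list \<times> int list \<Rightarrow> nat list list \<times> int list \<Rightarrow> bool" where
  "block_rel N c d \<longleftrightarrow> snd c = snd d \<and> msize (fst c) = msize (fst d)
                        \<and> residues N c = residues N d"

text \<open>The \<approx>_N-equivalence class of c inside A_N^m.\<close>
definition block :: "nat \<Rightarrow> nat \<Rightarrow> nat list list \<times> int list \<Rightarrow> (nat list list \<times> int list) set" where
  "block N m c = {d \<in> configm m. block_rel N c d}"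

definition eta :: "nat \<Rightarrow> nat list \<times> int \<Rightarrow> nat list list \<times> int list" where
  "eta e c = (let B = beta_set (snd c) (fst c);
                  C = (\<lambda>i. from_beta {(b - int i) div int e | b. b \<in> B \<and> b mod int e = int i})
              in (map (\<lambda>i. fst (C i)) [0..<e], map (\<lambda>i. snd (C i)) [0..<e]))"

definition psi :: "nat \<Rightarrow> nat \<Rightarrow> nat \<Rightarrow> int \<Rightarrow> int" where
  "psi e r k b = ((b div int e + 1) * int r - int k) * int e + b mod int e"

definition Uglov :: "nat \<Rightarrow> nat \<Rightarrow> nat list list \<times> int list \<Rightarrow> nat list \<times> int" where
  "Uglov e r c = from_beta (\<Union>k\<in>{1..r}. psi e r k ` beta_set (snd c ! (k - 1)) (fst c ! (k - 1)))"

end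

theory Submission
  imports Defs "HOL-Library.Groups_Big_Fun"
begin

text \<open>
  Measure a set of integers \<open>Z\<close> by its moments \<open>\<Sum>x. f x * (\<one>\<^sub>Z x - \<one>\<^sub>{x<0} x)\<close>, finite sums
  when \<open>Z\<close> is a beta-set. For \<open>Z = B\<^sub>s(\<lambda>)\<close> the moment of \<open>1\<close> is the charge \<open>s\<close>, the moment of
  \<open>x \<mapsto> x\<close> is \<open>|\<lambda>|\<close> plus a function of \<open>s\<close>, and the moment of the indicator of the residue
  class \<open>j\<close> mod \<open>N\<close> is, up to a function of \<open>s\<close>, the difference of the numbers of nodes of
  \<open>N\<close>-residues \<open>j\<close> and \<open>j + 1\<close>. Since residue counts are determined by their cyclic differences
  and their total, \<open>\<approx>\<^sub>N\<close> on multicharged multipartitions amounts to equality of the charges, of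
  the total moment of \<open>x \<mapsto> x\<close>, and of the total moments of all residue classes.

  Cut every beta-set into its slices \<open>{a. a N + i \<in> Z}\<close>. Then \<open>\<eta> \<circ> \<Psi>\<^sub>r\<close> just transposes the
  \<open>r \<times> e\<close> array of slices (reversing the order of the \<open>r\<close> components), so it is a bijection
  \<open>\<A>\<^sub>e\<^sup>r \<rightarrow> \<A>\<^sub>r\<^sup>e\<close>. Under transposition residue-class moments mod \<open>e\<close> on one side become
  charges on the other and vice versa, and once all charges agree the two moments of \<open>x \<mapsto> x\<close>
  differ by proportional amounts; hence \<open>\<approx>\<^sub>e\<close> is carried exactly onto \<open>\<approx>\<^sub>r\<close>.
\<close>

section \<open>Beta-sets of partitions\<close>

definition bead :: "int \<Rightarrow> nat list \<Rightarrow> nat \<Rightarrow> int" where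
  "bead s xs i = int (part xs i) - int i + s"

lemma beta_set_eq_bead_image: "beta_set s xs = bead s xs ` {1..}"
  unfolding beta_set_def bead_def by auto

lemma part_beyond_length: "length xs < i \<Longrightarrow> part xs i = 0"
  by (simp add: part_def)

lemma part_antimono:
  assumes "is_partition xs" "1 \<le> i" "i \<le> j"
  shows "part xs j \<le> part xs i"
proof (cases "i < j \<and> j \<le> length xs")
  case True
  have "sorted_wrt (\<ge>) xs" using assms(1) by (simp add: is_partition_def)
  then have "xs ! (j - 1) \<le> xs ! (i - 1)"
    using sorted_wrt_nth_less[of "(\<ge>)" xs "i - 1" "j - 1"] True assms by auto
  then show ?thesis using True assms by (auto simp: part_def)
qed (use assms in \<open>auto simp: part_def\<close>)

lemma part_pos:
  assumes "is_partition xs" "1 \<le> i" "i \<le> length xs"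
  shows "0 < part xs i"
  using assms by (auto simp: part_def is_partition_def)

lemma bead_strict_antimono:
  assumes "is_partition xs" "1 \<le> i" "i < j"
  shows "bead s xs j < bead s xs i"
  using part_antimono[OF assms(1,2), of j] assms(3) unfolding bead_def by linarith

lemma bead_beyond_length: "length xs < i \<Longrightarrow> bead s xs i = s - int i"
  by (simp add: bead_def part_beyond_length)

lemma bead_lower_bound:
  assumes "is_partition xs" "1 \<le> i" "i \<le> length xs"
  shows "s - int i < bead s xs i"
  using part_pos[OF assms] by (simp add: bead_def)

lemma strict_antimono_image_eq:
  fixes f g :: "nat \<Rightarrow> int"
  assumes f: "\<And>i j. 1 \<le> i \<Longrightarrow> i < j \<Longrightarrow> f j < f i"
      and g: "\<And>i j. 1 \<le> i \<Longrightarrow> i < j \<Longrightarrow> g j < g i"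
      and im: "f ` {1..} = g ` {1..}"
      and n: "1 \<le> n"
  shows "f n = g n"
  using n
proof (induction n rule: less_induct)
  case (less n)
  have not_below: "\<not> f' n < g' n"
    if f': "\<And>i j. 1 \<le> i \<Longrightarrow> i < j \<Longrightarrow> f' j < f' i"
      and g': "\<And>i j. 1 \<le> i \<Longrightarrow> i < j \<Longrightarrow> g' j < g' i"
      and im': "f' ` {1..} = g' ` {1..}"
      and agree: "\<And>m. 1 \<le> m \<Longrightarrow> m < n \<Longrightarrow> f' m = g' m" for f' g' :: "nat \<Rightarrow> int"
  proof
    assume lt: "f' n < g' n"
    have "g' n \<in> f' ` {1..}" using im' less.prems by auto
    then obtain m where m: "1 \<le> m" "g' n = f' m" by auto
    with lt have "m < n"
      using f'[of n m] less.prems by (cases m n rule: linorder_cases) auto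
    then show False using g'[OF m(1)] agree[OF m(1)] m(2) by fastforce
  qed
  have "\<not> f n < g n" by (rule not_below[OF f g im]) (auto intro: less.IH)
  moreover have "\<not> g n < f n" by (rule not_below[OF g f im[symmetric]]) (auto intro: less.IH[symmetric])
  ultimately show ?case by simp
qed

lemma beta_set_inject:
  assumes px: "is_partition xs" and py: "is_partition ys"
      and eq: "beta_set s xs = beta_set t ys"
  shows "s = t \<and> xs = ys"
proof -
  have beads: "bead s xs n = bead t ys n" if "1 \<le> n" for n
    using strict_antimono_image_eq[OF bead_strict_antimono[OF px] bead_strict_antimono[OF py]] eq that
    by (simp add: beta_set_eq_bead_image)
  have "s = t"
    using beads[of "Suc (length xs + length ys)"] by (simp add: bead_beyond_length)
  then have parts: "part xs i = part ys i" if "1 \<le> i" for i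
    using beads[OF that] by (simp add: bead_def)
  have no_longer: "length as \<le> length bs"
    if "is_partition as" and "\<And>i. 1 \<le> i \<Longrightarrow> part as i = part bs i" for as bs
  proof (rule ccontr)
    assume longer: "\<not> length as \<le> length bs"
    then have "0 < part as (length as)" using part_pos[OF that(1), of "length as"] by simp
    moreover have "part bs (length as) = 0" using longer by (simp add: part_beyond_length)
    ultimately show False using that(2)[of "length as"] longer by simp
  qed
  have "length xs = length ys"
    using no_longer[OF px parts] no_longer[OF py parts[symmetric]] by simp
  then have "xs = ys"
  proof (rule nth_equalityI)
    fix i assume "i < length xs"
    then show "xs ! i = ys ! i"
      using parts[of "Suc i"] \<open>length xs = length ys\<close> by (simp add: part_def)
  qed
  with \<open>s = t\<close> show ?thesis by simp
qed

lemma beta_set_empty: "beta_set s [] = {x. x < s}"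
proof (intro set_eqI iffI)
  fix x assume "x \<in> {x. x < s}"
  then have "x = bead s [] (nat (s - x)) \<and> 1 \<le> nat (s - x)"
    by (simp add: bead_beyond_length)
  then show "x \<in> beta_set s []" unfolding beta_set_eq_bead_image by fastforce
qed (auto simp: beta_set_eq_bead_image bead_beyond_length)

lemma beta_set_add_one:
  "beta_set (s + 1) ys = insert (int (part ys 1) + s) (beta_set s (tl ys))"
proof -
  have ones: "{1..} = insert 1 (Suc ` {1::nat..})"
  proof (intro set_eqI iffI)
    fix x :: nat assume "x \<in> {1..}"
    then show "x \<in> insert 1 (Suc ` {1..})"
      by (cases "x = 1") (auto simp: image_iff intro!: bexI[of _ "x - 1"])
  qed auto
  have "bead (s + 1) ys ` {1..} = insert (bead (s + 1) ys 1) (bead (s + 1) ys ` Suc ` {1..})"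
    by (subst ones) (simp only: image_insert)
  also have "bead (s + 1) ys ` Suc ` {1..} = bead s (tl ys) ` {1..}"
    unfolding image_image
    by (rule image_cong[OF refl]) (cases ys; auto simp: bead_def part_def nth_tl)
  also have "bead (s + 1) ys 1 = int (part ys 1) + s" by (simp add: bead_def)
  finally show ?thesis by (simp add: beta_set_eq_bead_image)
qed

lemma beta_set_insert_above:
  assumes px: "is_partition xs" and above: "bead s xs 1 < p"
  obtains ys where "is_partition ys" and "beta_set (s + 1) ys = insert p (beta_set s xs)"
proof (cases "s < p")
  case True
  have "x \<le> nat (p - s)" if "x \<in> set xs" for x
  proof -
    obtain i where "i < length xs" "x = xs ! i" using \<open>x \<in> set xs\<close> by (auto simp: in_set_conv_nth)
    then have "x \<le> part xs 1" using part_antimono[OF px, of 1 "Suc i"] by (simp add: part_def)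
    then show ?thesis using above by (simp add: bead_def)
  qed
  then have "is_partition (nat (p - s) # xs)" using True px by (simp add: is_partition_def)
  moreover have "beta_set (s + 1) (nat (p - s) # xs) = insert p (beta_set s xs)"
    using True beta_set_add_one[of s "nat (p - s) # xs"] by (simp add: part_def)
  ultimately show ?thesis by (rule that)
next
  case False
  then have "xs = []" using above part_pos[OF px, of 1] by (cases xs) (auto simp: bead_def)
  moreover have "p = s" using False above calculation by (simp add: bead_def)
  ultimately show ?thesis using px beta_set_add_one[of s xs] that by (simp add: part_def)
qed

lemma beta_set_exists_aux:
  assumes "finite (B \<inter> {M<..})" and "\<forall>x\<le>M. x \<in> B"
  shows "\<exists>s xs. is_partition xs \<and> beta_set s xs = B"
  using assms
proof (induction "card (B \<inter> {M<..})" arbitrary: B)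
  case 0
  then have "B = {x. x < M + 1}" by (auto simp: not_le[symmetric])
  then show ?case
    using beta_set_empty[of "M + 1"]
    by (intro exI[of _ "M + 1"] exI[of _ "[]"]) (simp add: is_partition_def)
next
  case (Suc n)
  define p where "p = Max (B \<inter> {M<..})"
  have fin: "finite (B \<inter> {M<..})" and ne: "B \<inter> {M<..} \<noteq> {}"
    using Suc by auto
  have pB: "p \<in> B" "M < p" using Max_in[OF fin ne] by (auto simp: p_def)
  have pmax: "x \<le> p" if "x \<in> B" for x
    using Max_ge[OF fin, of x] pB that by (cases "x \<le> M") (auto simp: p_def)
  have "(B - {p}) \<inter> {M<..} = B \<inter> {M<..} - {p}" by blast
  then have "card ((B - {p}) \<inter> {M<..}) = n"
    using Suc.hyps(2) pB fin by (simp add: card_Diff_singleton)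
  moreover have "finite ((B - {p}) \<inter> {M<..})" using fin by (rule finite_subset[rotated]) auto
  ultimately obtain s xs where px: "is_partition xs" and bs: "beta_set s xs = B - {p}"
    using Suc.hyps(1)[of "B - {p}"] Suc.prems pB by auto
  have "bead s xs 1 \<in> B - {p}" using bs by (auto simp: beta_set_eq_bead_image)
  then have "bead s xs 1 < p" using pmax by force
  then obtain ys where "is_partition ys" "beta_set (s + 1) ys = insert p (B - {p})"
    using beta_set_insert_above[OF px] bs by metis
  moreover have "insert p (B - {p}) = B" using pB by blast
  ultimately show ?case by auto
qed

lemma beta_set_exists:
  assumes "is_beta_set B"
  shows "\<exists>s xs. is_partition xs \<and> beta_set s xs = B"
proof -
  obtain M U where M: "\<forall>x\<le>M. x \<in> B" and U: "\<forall>x\<ge>U. x \<notin> B"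
    using assms by (auto simp: is_beta_set_def)
  have "B \<inter> {M<..} \<subseteq> {M<..<U}" using U by (auto simp: not_le[symmetric])
  then have "finite (B \<inter> {M<..})" by (rule finite_subset) simp
  then show ?thesis using beta_set_exists_aux M by blast
qed

lemma from_beta:
  assumes "is_beta_set B"
  shows "is_partition (fst (from_beta B))" and "beta_set (snd (from_beta B)) (fst (from_beta B)) = B"
proof -
  have "\<exists>!p. is_partition (fst p) \<and> beta_set (snd p) (fst p) = B"
  proof -
    obtain s xs where "is_partition xs" "beta_set s xs = B" using beta_set_exists[OF assms] by blast
    then show ?thesis
      by (intro ex1I[of _ "(xs, s)"]) (auto dest: beta_set_inject)
  qed
  then have "is_partition (fst (from_beta B)) \<and> beta_set (snd (from_beta B)) (fst (from_beta B)) = B"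
    unfolding from_beta_def by (rule theI')
  then show "is_partition (fst (from_beta B))" "beta_set (snd (from_beta B)) (fst (from_beta B)) = B"
    by simp_all
qed

lemma beta_set_split:
  assumes "is_partition xs"
  shows "beta_set s xs = bead s xs ` {1..length xs} \<union> {x. x < s - int (length xs)}"
proof -
  have "{1..} = {1..length xs} \<union> {length xs<..}" by auto
  moreover have "bead s xs ` {length xs<..} = {x. x < s - int (length xs)}"
  proof (intro set_eqI iffI)
    fix x assume "x \<in> {x. x < s - int (length xs)}"
    then have "x = bead s xs (nat (s - x)) \<and> nat (s - x) \<in> {length xs<..}"
      by (auto simp: bead_beyond_length)
    then show "x \<in> bead s xs ` {length xs<..}" by blast
  qed (auto simp: bead_beyond_length)
  ultimately show ?thesis by (simp add: beta_set_eq_bead_image image_Un)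
qed

lemma bead_le_sum: "bead s xs i \<le> s + int (sum_list xs)"
proof -
  have "part xs i \<le> sum_list xs" by (auto simp: part_def intro!: member_le_sum_list)
  then show ?thesis by (simp add: bead_def)
qed

lemma is_beta_set_beta_set:
  assumes "is_partition xs"
  shows "is_beta_set (beta_set s xs)"
proof -
  have "x \<notin> beta_set s xs" if "s + int (sum_list xs) < x" for x
  proof
    assume "x \<in> beta_set s xs"
    then obtain i where "x = bead s xs i" by (auto simp: beta_set_eq_bead_image)
    then show False using that bead_le_sum[of s xs i] by simp
  qed
  then show ?thesis
    unfolding is_beta_set_def beta_set_split[OF assms]
    by (intro conjI exI[of _ "s - int (length xs) - 1"] exI[of _ "s + int (sum_list xs) + 1"]) auto
qed

section \<open>Moments of sets of integers\<close>

definition excess :: "int set \<Rightarrow> int \<Rightarrow> int" where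
  "excess Z x = of_bool (x \<in> Z) - of_bool (x < 0)"

text \<open>Only meaningful for beta-sets: otherwise the support is infinite and \<open>Sum_any\<close> gives 0.\<close>
definition moment :: "(int \<Rightarrow> int) \<Rightarrow> int set \<Rightarrow> int" where
  "moment f Z = (\<Sum>x. f x * excess Z x)"

abbreviation charge :: "int set \<Rightarrow> int" where
  "charge Z \<equiv> moment (\<lambda>_. 1) Z"

lemma excess_eq_0_iff: "excess Z x = 0 \<longleftrightarrow> (x \<in> Z \<longleftrightarrow> x < 0)"
  by (simp add: excess_def)

lemma is_beta_set_iff_finite_excess: "is_beta_set Z \<longleftrightarrow> finite {x. excess Z x \<noteq> 0}"
proof
  assume "is_beta_set Z"
  then obtain M U where M: "\<forall>x\<le>M. x \<in> Z" and U: "\<forall>x\<ge>U. x \<notin> Z"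
    by (auto simp: is_beta_set_def)
  have "x \<in> {min M 0..max U 0}" if "excess Z x \<noteq> 0" for x
  proof (cases "x < 0")
    case True
    then have "M < x" using that M by (auto simp: excess_eq_0_iff not_le[symmetric])
    then show ?thesis using True by simp
  next
    case False
    then have "x < U" using that U by (auto simp: excess_eq_0_iff not_le[symmetric])
    then show ?thesis using False by simp
  qed
  then show "finite {x. excess Z x \<noteq> 0}" by (blast intro: finite_subset[of _ "{min M 0..max U 0}"])
next
  assume "finite {x. excess Z x \<noteq> 0}"
  then obtain b where b: "\<And>x. excess Z x \<noteq> 0 \<Longrightarrow> \<bar>x\<bar> \<le> b"
    using bdd_above_finite[of "abs ` {x. excess Z x \<noteq> 0}"] by (auto simp: bdd_above_def)
  have "x \<in> Z" if "x \<le> -\<bar>b\<bar> - 1" for x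
  proof (rule ccontr)
    assume "x \<notin> Z"
    then have "\<bar>x\<bar> \<le> b" using b[of x] that by (simp add: excess_eq_0_iff)
    then show False using that by linarith
  qed
  moreover have "x \<notin> Z" if "\<bar>b\<bar> + 1 \<le> x" for x
  proof
    assume "x \<in> Z"
    then have "\<bar>x\<bar> \<le> b" using b[of x] that by (simp add: excess_eq_0_iff)
    then show False using that by linarith
  qed
  ultimately show "is_beta_set Z" unfolding is_beta_set_def by blast
qed

lemma moment_eq_sum:
  assumes "finite W" and "{x. excess Z x \<noteq> 0} \<subseteq> W"
  shows "moment f Z = (\<Sum>x\<in>W. f x * excess Z x)"
  unfolding moment_def using assms by (intro Sum_any.expand_superset) auto

lemma moment_affine:
  assumes "is_beta_set Z"
  shows "moment (\<lambda>x. p * x + q) Z = p * moment (\<lambda>x. x) Z + q * charge Z"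
proof -
  have fin: "finite {x. excess Z x \<noteq> 0}" using assms by (simp add: is_beta_set_iff_finite_excess)
  show ?thesis
    by (simp add: moment_eq_sum[OF fin order_refl] sum.distrib sum_distrib_left algebra_simps)
qed

definition slice :: "nat \<Rightarrow> nat \<Rightarrow> int set \<Rightarrow> int set" where
  "slice N i Z = {a. a * int N + int i \<in> Z}"

definition interleave :: "nat \<Rightarrow> (nat \<Rightarrow> int set) \<Rightarrow> int set" where
  "interleave N S = {x. x div int N \<in> S (nat (x mod int N))}"

lemma div_mod_unique_int:
  fixes q t n :: int
  assumes "0 \<le> t" "t < n"
  shows "(q * n + t) div n = q" and "(q * n + t) mod n = t"
proof -
  have "(t + q * n) div n = t div n + q" "(t + q * n) mod n = t mod n" using assms by simp_all
  then show "(q * n + t) div n = q" "(q * n + t) mod n = t" using assms by (simp_all add: add.commute)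
qed

lemma div_mod_slice_index:
  assumes "i < N"
  shows "(a * int N + int i) div int N = a" and "(a * int N + int i) mod int N = int i"
  using assms by simp_all

lemma slice_index_decomp:
  assumes "0 < N"
  shows "x = (x div int N) * int N + int (nat (x mod int N))" and "nat (x mod int N) < N"
  using assms by (simp_all add: nat_less_iff)

lemma slice_embedding_neg_iff:
  assumes "i < N"
  shows "a * int N + int i < 0 \<longleftrightarrow> a < 0"
proof
  assume "a < 0"
  then have "a * int N \<le> -1 * int N" by (intro mult_right_mono) auto
  then show "a * int N + int i < 0" using assms by simp
next
  assume "a * int N + int i < 0"
  then show "a < 0" by (smt (verit) mult_nonneg_nonneg of_nat_0_le_iff)
qed

lemma excess_slice:
  assumes "i < N"
  shows "excess (slice N i Z) a = excess Z (a * int N + int i)"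
  by (simp add: excess_def slice_def slice_embedding_neg_iff[OF assms])

lemma slice_interleave: "i < N \<Longrightarrow> slice N i (interleave N S) = S i"
  by (simp add: slice_def interleave_def)

lemma set_eq_by_slices:
  assumes "0 < N" and "\<And>i. i < N \<Longrightarrow> slice N i Z = slice N i Z'"
  shows "Z = Z'"
proof (rule set_eqI)
  fix x
  have "x \<in> Z \<longleftrightarrow> x div int N \<in> slice N (nat (x mod int N)) Z"
    using slice_index_decomp[OF assms(1), of x] by (simp add: slice_def)
  moreover have "x \<in> Z' \<longleftrightarrow> x div int N \<in> slice N (nat (x mod int N)) Z'"
    using slice_index_decomp[OF assms(1), of x] by (simp add: slice_def)
  ultimately show "x \<in> Z \<longleftrightarrow> x \<in> Z'"
    using assms(2) slice_index_decomp(2)[OF assms(1)] by simp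
qed

lemma excess_support_by_slices:
  assumes "0 < N"
  shows "{x. excess Z x \<noteq> 0}
       = (\<Union>i<N. (\<lambda>a. a * int N + int i) ` {a. excess (slice N i Z) a \<noteq> 0})"
proof (intro set_eqI iffI)
  fix x assume "x \<in> {x. excess Z x \<noteq> 0}"
  then show "x \<in> (\<Union>i<N. (\<lambda>a. a * int N + int i) ` {a. excess (slice N i Z) a \<noteq> 0})"
    using slice_index_decomp[OF assms, of x] excess_slice[of "nat (x mod int N)" N Z "x div int N"]
    by (auto intro!: bexI[of _ "nat (x mod int N)"] image_eqI[of _ _ "x div int N"])
qed (auto simp: excess_slice)

lemma is_beta_set_iff_slices:
  assumes "0 < N"
  shows "is_beta_set Z \<longleftrightarrow> (\<forall>i<N. is_beta_set (slice N i Z))"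
proof
  assume "is_beta_set Z"
  then have fin: "finite {x. excess Z x \<noteq> 0}" by (simp add: is_beta_set_iff_finite_excess)
  have "finite {a. excess (slice N i Z) a \<noteq> 0}" if "i < N" for i
  proof -
    have "inj (\<lambda>a. a * int N + int i)" using assms by (auto intro!: injI)
    then have "finite ((\<lambda>a. a * int N + int i) -` {x. excess Z x \<noteq> 0})"
      by (rule finite_vimageI[OF fin])
    then show ?thesis by (simp add: vimage_def excess_slice[OF that])
  qed
  then show "\<forall>i<N. is_beta_set (slice N i Z)" by (simp add: is_beta_set_iff_finite_excess)
next
  assume "\<forall>i<N. is_beta_set (slice N i Z)"
  then show "is_beta_set Z"
    unfolding is_beta_set_iff_finite_excess excess_support_by_slices[OF assms, of Z] by blast
qed

lemma moment_slices:
  assumes N: "0 < N" and Z: "is_beta_set Z"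
  shows "moment f Z = (\<Sum>i<N. moment (\<lambda>a. f (a * int N + int i)) (slice N i Z))"
proof -
  let ?emb = "\<lambda>i a. a * int N + int i"
  define S where "S i = {a. excess (slice N i Z) a \<noteq> 0}" for i
  have fin: "finite (S i)" if "i < N" for i
    using Z that is_beta_set_iff_slices[OF N, of Z] by (simp add: S_def is_beta_set_iff_finite_excess)
  have disj: "?emb i ` S i \<inter> ?emb j ` S j = {}" if "i < N" "j < N" "i \<noteq> j" for i j
    using that div_mod_slice_index(2)[of _ N] by (auto dest: arg_cong[where f = "\<lambda>x. x mod int N"])
  have "moment f Z = (\<Sum>x\<in>(\<Union>i<N. ?emb i ` S i). f x * excess Z x)"
    by (rule moment_eq_sum) (use fin in \<open>auto simp: S_def excess_support_by_slices[OF N, of Z]\<close>)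
  also have "\<dots> = (\<Sum>i<N. \<Sum>x\<in>?emb i ` S i. f x * excess Z x)"
    by (rule sum.UNION_disjoint) (use fin disj in auto)
  also have "\<dots> = (\<Sum>i<N. \<Sum>a\<in>S i. f (?emb i a) * excess (slice N i Z) a)"
    by (rule sum.cong[OF refl], subst sum.reindex) (auto simp: inj_on_def excess_slice)
  also have "\<dots> = (\<Sum>i<N. moment (\<lambda>a. f (?emb i a)) (slice N i Z))"
    by (rule sum.cong[OF refl], rule moment_eq_sum[symmetric]) (use fin in \<open>auto simp: S_def\<close>)
  finally show ?thesis .
qed

definition res_ind :: "nat \<Rightarrow> nat \<Rightarrow> int \<Rightarrow> int" where
  "res_ind N j x = of_bool (x mod int N = int j)"

lemma moment_const:
  assumes "is_beta_set Z"
  shows "moment (\<lambda>_. q) Z = q * charge Z"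
  using moment_affine[OF assms, of 0 q] by simp

lemma moment_res_ind:
  assumes j: "j < N" and Z: "is_beta_set Z"
  shows "moment (res_ind N j) Z = charge (slice N j Z)"
proof -
  have N: "0 < N" using j by simp
  have "moment (res_ind N j) Z = (\<Sum>i<N. moment (\<lambda>a. res_ind N j (a * int N + int i)) (slice N i Z))"
    by (rule moment_slices[OF N Z])
  also have "\<dots> = (\<Sum>i<N. of_bool (i = j) * charge (slice N i Z))"
  proof (rule sum.cong[OF refl])
    fix i assume "i \<in> {..<N}"
    then have i: "i < N" by simp
    have "res_ind N j (a * int N + int i) = of_bool (i = j)" for a
      unfolding res_ind_def div_mod_slice_index(2)[OF i] by simp
    moreover have "is_beta_set (slice N i Z)"
      using Z i is_beta_set_iff_slices[OF N, of Z] by simp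
    ultimately show "moment (\<lambda>a. res_ind N j (a * int N + int i)) (slice N i Z)
             = of_bool (i = j) * charge (slice N i Z)"
      using moment_const[of "slice N i Z" "of_bool (i = j)"] by simp
  qed
  also have "\<dots> = charge (slice N j Z)"
  proof -
    have "{..<N} \<inter> {i. i = j} = {j}" using j by auto
    then show ?thesis by simp
  qed
  finally show ?thesis .
qed

section \<open>Moments of the beta-set of a partition\<close>

definition displacement :: "(int \<Rightarrow> int) \<Rightarrow> int \<Rightarrow> nat list \<Rightarrow> int" where
  "displacement f s xs = (\<Sum>i\<in>{1..length xs}. f (bead s xs i) - f (s - int i))"

lemma sum_of_bool_eq_image:
  assumes "inj_on g A" "finite A"
  shows "(\<Sum>i\<in>A. (of_bool (x = g i) :: int)) = of_bool (x \<in> g ` A)"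
proof -
  have "(\<Sum>i\<in>A. (of_bool (x = g i) :: int)) = (\<Sum>y\<in>g ` A. of_bool (x = y))"
    using sum.reindex[OF assms(1), of "\<lambda>y. (of_bool (x = y) :: int)"] by simp
  also have "\<dots> = of_bool (x \<in> g ` A)"
    using assms(2) by (simp add: sum.delta)
  finally show ?thesis .
qed

lemma beta_set_indicator_shift:
  assumes px: "is_partition xs"
  shows "(of_bool (x \<in> beta_set s xs) - of_bool (x < s) :: int)
       = (\<Sum>i\<in>{1..length xs}. of_bool (x = bead s xs i) - of_bool (x = s - int i))"
proof -
  let ?I = "{1..length xs}"
  have inj_bead: "inj_on (bead s xs) ?I"
  proof (rule inj_onI)
    fix i j assume "i \<in> ?I" "j \<in> ?I" "bead s xs i = bead s xs j"
    then show "i = j"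
      using bead_strict_antimono[OF px, of i j s] bead_strict_antimono[OF px, of j i s]
      by (cases i j rule: linorder_cases) auto
  qed
  have inj_vac: "inj_on (\<lambda>i. s - int i) ?I" by (rule inj_onI) auto
  have vacuum: "(\<lambda>i. s - int i) ` ?I = {s - int (length xs)..<s}"
  proof (intro set_eqI iffI)
    fix x assume "x \<in> {s - int (length xs)..<s}"
    then have "x = s - int (nat (s - x)) \<and> nat (s - x) \<in> ?I" by auto
    then show "x \<in> (\<lambda>i. s - int i) ` ?I" by blast
  qed auto
  have disjoint: "\<not> x < s - int (length xs)" if "x \<in> bead s xs ` ?I"
    using that bead_lower_bound[OF px, of _ s] by force
  have "(\<Sum>i\<in>?I. (of_bool (x = bead s xs i) - of_bool (x = s - int i) :: int))
     = of_bool (x \<in> bead s xs ` ?I) - of_bool (x \<in> {s - int (length xs)..<s})"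
    by (simp only: sum_subtractf sum_of_bool_eq_image[OF inj_bead] sum_of_bool_eq_image[OF inj_vac]
        vacuum finite_atLeastAtMost)
  then show ?thesis
    using disjoint by (auto simp: beta_set_split[OF px])
qed

lemma excess_beta_set_bound:
  assumes px: "is_partition xs" and "excess (beta_set s xs) x \<noteq> 0"
  shows "\<bar>x\<bar> \<le> \<bar>s\<bar> + int (length xs) + int (sum_list xs)"
proof -
  consider "x \<in> beta_set s xs" "0 \<le> x" | "x \<notin> beta_set s xs" "x < 0"
    using assms(2) by (auto simp: excess_eq_0_iff)
  then show ?thesis
  proof cases
    case 1
    then have "x \<le> s + int (sum_list xs)"
      using bead_le_sum[of s xs] by (auto simp: beta_set_split[OF px])
    then show ?thesis using 1(2) by simp
  next
    case 2
    then show ?thesis by (auto simp: beta_set_split[OF px])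
  qed
qed

lemma excess_support_charge: "{x. excess {x. x < s} x \<noteq> 0} \<subseteq> {min s 0..<max s 0}"
  by (auto simp: excess_eq_0_iff)

lemma moment_beta_set:
  assumes px: "is_partition xs"
  shows "moment f (beta_set s xs) = displacement f s xs + moment f {x. x < s}"
proof -
  define b where "b = \<bar>s\<bar> + int (length xs) + int (sum_list xs) + 1"
  let ?W = "{-b..<b}" and ?I = "{1..length xs}"
  have supp: "{x. excess (beta_set s xs) x \<noteq> 0} \<subseteq> ?W" "{x. excess {x. x < s} x \<noteq> 0} \<subseteq> ?W"
    using excess_beta_set_bound[OF px, of s] excess_support_charge[of s] by (force simp: b_def)+
  have beads: "bead s xs i \<in> ?W" "s - int i \<in> ?W" if "i \<in> ?I" for i
    using that bead_le_sum[of s xs i] bead_lower_bound[OF px, of i s] by (auto simp: b_def)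
  have "moment f (beta_set s xs) - moment f {x. x < s}
      = (\<Sum>x\<in>?W. f x * (of_bool (x \<in> beta_set s xs) - of_bool (x < s)))"
    by (simp add: moment_eq_sum[OF _ supp(1)] moment_eq_sum[OF _ supp(2)] excess_def
        sum_subtractf[symmetric] algebra_simps)
  also have "\<dots> = (\<Sum>x\<in>?W. \<Sum>i\<in>?I. f x * of_bool (x = bead s xs i) - f x * of_bool (x = s - int i))"
    by (simp add: beta_set_indicator_shift[OF px] sum_distrib_left right_diff_distrib)
  also have "\<dots> = (\<Sum>i\<in>?I. \<Sum>x\<in>?W. f x * of_bool (x = bead s xs i) - f x * of_bool (x = s - int i))"
    by (rule sum.swap)
  also have "\<dots> = displacement f s xs"
    unfolding displacement_def
  proof (rule sum.cong[OF refl])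
    fix i assume "i \<in> ?I"
    then have "bead s xs i \<in> ?W" "s - int i \<in> ?W" by (rule beads)+
    then show "(\<Sum>x\<in>?W. f x * of_bool (x = bead s xs i) - f x * of_bool (x = s - int i))
        = f (bead s xs i) - f (s - int i)"
      by (simp add: sum_subtractf Int_insert_right mult.commute[of "f _"])
  qed
  finally show ?thesis by simp
qed

lemma moment_one_charge: "charge {x. x < s} = s"
proof (cases "0 \<le> s")
  case True
  have "charge {x. x < s} = (\<Sum>x\<in>{0..<s}. 1)"
    using excess_support_charge[of s] True
    by (subst moment_eq_sum[of "{0..<s}"]) (auto simp: excess_def intro!: sum.cong)
  then show ?thesis using True by simp
next
  case False
  have "charge {x. x < s} = (\<Sum>x\<in>{s..<0}. - 1)"
    using excess_support_charge[of s] False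
    by (subst moment_eq_sum[of "{s..<0}"]) (auto simp: excess_def intro!: sum.cong)
  then show ?thesis using False by simp
qed

lemma moment_one_beta_set: "is_partition xs \<Longrightarrow> charge (beta_set s xs) = s"
  by (simp add: moment_beta_set moment_one_charge displacement_def)

lemma sum_list_eq_sum_part: "sum_list xs = (\<Sum>i\<in>{1..length xs}. part xs i)"
proof -
  have "sum_list xs = (\<Sum>i<length xs. xs ! i)" by (simp add: sum_list_sum_nth atLeast0LessThan)
  also have "\<dots> = (\<Sum>i\<in>{1..length xs}. part xs i)"
    by (rule sum.reindex_bij_witness[where i = "\<lambda>i. i - 1" and j = "Suc"]) (auto simp: part_def)
  finally show ?thesis .
qed

lemma displacement_id: "displacement (\<lambda>x. x) s xs = int (psize xs)"
  by (simp add: displacement_def bead_def psize_def sum_list_eq_sum_part)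

section \<open>Blocks in terms of moments\<close>

definition row_res_count :: "nat \<Rightarrow> int \<Rightarrow> nat \<Rightarrow> nat \<Rightarrow> nat" where
  "row_res_count N c m j = card {y \<in> {1..m}. (c + int y) mod int N = int j}"

lemma row_res_count_Suc:
  "int (row_res_count N c (Suc m) j)
     = int (row_res_count N c m j) + of_bool ((c + int (Suc m)) mod int N = int j)"
proof -
  have "{y \<in> {1..Suc m}. (c + int y) mod int N = int j}
      = (if (c + int (Suc m)) mod int N = int j then insert (Suc m) else id)
          {y \<in> {1..m}. (c + int y) mod int N = int j}"
    by (auto simp: le_Suc_eq)
  then show ?thesis by (simp add: row_res_count_def)
qed

lemma int_Suc_mod: "int (Suc j mod N) = (int j + 1) mod int N"
  by (simp add: of_nat_mod add.commute)

lemma mod_add_one_eq_iff: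
  assumes "j < N"
  shows "(z + 1) mod int N = int (Suc j mod N) \<longleftrightarrow> z mod int N = int j"
proof -
  have "(z + 1) mod int N = (int j + 1) mod int N \<longleftrightarrow> z mod int N = int j mod int N"
    by (simp add: mod_eq_dvd_iff)
  then show ?thesis using assms by (simp add: int_Suc_mod del: of_nat_Suc)
qed

lemma row_res_count_diff:
  assumes "j < N"
  shows "int (row_res_count N c m j) - int (row_res_count N c m (Suc j mod N))
       = of_bool ((c + int m) mod int N = int j) - of_bool (c mod int N = int j)"
proof (induction m)
  case (Suc m)
  have "(c + int (Suc m)) mod int N = int (Suc j mod N) \<longleftrightarrow> (c + int m) mod int N = int j"
    using mod_add_one_eq_iff[OF assms, of "c + int m"] by (simp add: ac_simps)
  then show ?case using Suc by (simp only: row_res_count_Suc)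
qed (simp add: row_res_count_def)

lemma sum_row_res_count:
  assumes "0 < N"
  shows "(\<Sum>j<N. int (row_res_count N c m j)) = int m"
proof (induction m)
  case (Suc m)
  have "(\<Sum>j<N. of_bool ((c + int (Suc m)) mod int N = int j) :: int) = 1"
  proof -
    have "{..<N} \<inter> {j. (c + int (Suc m)) mod int N = int j} = {nat ((c + int (Suc m)) mod int N)}"
      using assms by (auto simp: nat_less_iff)
    then show ?thesis by simp
  qed
  then show ?case using Suc by (simp only: row_res_count_Suc sum.distrib)
qed (simp add: row_res_count_def)

definition res_nodes :: "nat \<Rightarrow> int \<Rightarrow> nat list \<Rightarrow> nat \<Rightarrow> (nat \<times> nat) set" where
  "res_nodes N s xs j =
     {(x, y). 1 \<le> x \<and> 1 \<le> y \<and> y \<le> part xs x \<and> (s + int y - int x) mod int N = int j}"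

definition res_count :: "nat \<Rightarrow> int \<Rightarrow> nat list \<Rightarrow> nat \<Rightarrow> nat" where
  "res_count N s xs j = card (res_nodes N s xs j)"

lemma res_nodes_by_rows:
  "res_nodes N s xs j
     = (SIGMA x:{1..length xs}. {y \<in> {1..part xs x}. (s - int x + int y) mod int N = int j})"
proof -
  have "x \<le> length xs" if "1 \<le> y" "y \<le> part xs x" for x y
    using that by (auto simp: part_def split: if_splits)
  then show ?thesis unfolding res_nodes_def by (auto simp: algebra_simps)
qed

lemma finite_res_nodes: "finite (res_nodes N s xs j)"
  by (simp add: res_nodes_by_rows)

lemma res_count_by_rows:
  "res_count N s xs j = (\<Sum>x\<in>{1..length xs}. row_res_count N (s - int x) (part xs x) j)"
  unfolding res_count_def res_nodes_by_rows row_res_count_def by (subst card_SigmaI) auto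

lemma res_count_diff:
  assumes "j < N"
  shows "int (res_count N s xs j) - int (res_count N s xs (Suc j mod N))
       = displacement (res_ind N j) s xs"
  unfolding res_count_by_rows displacement_def
  by (simp add: sum_subtractf[symmetric] row_res_count_diff[OF assms] res_ind_def bead_def
      algebra_simps)

lemma sum_res_count:
  assumes "0 < N"
  shows "(\<Sum>j<N. int (res_count N s xs j)) = int (psize xs)"
proof -
  have "(\<Sum>j<N. int (res_count N s xs j))
      = (\<Sum>x\<in>{1..length xs}. \<Sum>j<N. int (row_res_count N (s - int x) (part xs x) j))"
    unfolding res_count_by_rows of_nat_sum by (rule sum.swap)
  then show ?thesis
    by (simp add: sum_row_res_count[OF assms] psize_def sum_list_eq_sum_part)
qed

lemma count_image_mset_mset_set:
  assumes "finite A"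
  shows "count (image_mset f (mset_set A)) y = card {a \<in> A. f a = y}"
  using assms by (simp add: count_image_mset vimage_def Int_def conj_commute)

lemma nodes_of_residue:
  "{a \<in> nodes ls. (\<lambda>(x, y, k). (ss ! k + int y - int x) mod int N) a = int j}
     = (\<lambda>(k, x, y). (x, y, k)) ` (SIGMA k:{..<length ls}. res_nodes N (ss ! k) (ls ! k) j)"
  by (auto simp: nodes_def res_nodes_def image_iff)

lemma finite_nodes: "finite (nodes ls)"
proof -
  have "nodes ls = (\<lambda>(k, x, y). (x, y, k)) `
          (SIGMA k:{..<length ls}. res_nodes 1 (replicate (length ls) 0 ! k) (ls ! k) 0)"
    using nodes_of_residue[of ls "replicate (length ls) 0" 1 0] by simp
  then show ?thesis by (simp add: finite_res_nodes)
qed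

lemma count_residues:
  "count (residues N (ls, ss)) (int j) = (\<Sum>k<length ls. res_count N (ss ! k) (ls ! k) j)"
proof -
  have "inj_on (\<lambda>(k, x, y). (x, y, k)) A" for A :: "(nat \<times> nat \<times> nat) set"
    by (auto simp: inj_on_def)
  then show ?thesis
    unfolding residues_def count_image_mset_mset_set[OF finite_nodes] fst_conv snd_conv
      nodes_of_residue
    by (simp add: card_image card_SigmaI finite_res_nodes res_count_def)
qed

lemma count_residues_out_of_range:
  assumes "0 < N" and "\<forall>j<N. r \<noteq> int j"
  shows "count (residues N c) r = 0"
proof -
  have "a mod int N \<noteq> r" for a
  proof -
    have "a mod int N = int (nat (a mod int N))" using assms(1) by simp
    then show ?thesis using assms(2) slice_index_decomp(2)[OF assms(1), of a] by metis
  qed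
  then show ?thesis by (auto simp: residues_def count_image_mset split: prod.splits)
qed

lemma eq_of_cyclic_differences:
  fixes u v :: "nat \<Rightarrow> int"
  assumes sums: "(\<Sum>j<N. u j) = (\<Sum>j<N. v j)"
      and diffs: "\<And>j. j < N \<Longrightarrow> u j - u (Suc j mod N) = v j - v (Suc j mod N)"
      and j: "j < N"
  shows "u j = v j"
proof -
  define w where "w j = u j - v j" for j
  have const: "w n = w 0" if "n < N" for n
    using that
  proof (induction n)
    case (Suc n)
    have "w (Suc n) = w n" using diffs[of n] Suc.prems by (simp add: w_def algebra_simps)
    then show ?case using Suc by simp
  qed simp
  have "(\<Sum>j<N. w j) = 0" using sums by (simp add: w_def sum_subtractf)
  moreover have "(\<Sum>j<N. w j) = (\<Sum>j<N. w 0)" by (rule sum.cong[OF refl], rule const, simp)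
  ultimately have "w 0 = 0" using j by simp
  then show ?thesis using const[OF j] by (simp add: w_def)
qed

lemma msize_eq_sum: "int (msize ls) = (\<Sum>k<length ls. int (psize (ls ! k)))"
  by (simp add: msize_def sum_list_sum_nth atLeast0LessThan)

lemma block_rel_iff_displacements:
  assumes N: "0 < N" and len: "length ls = length ls'"
  shows "block_rel N (ls, ss) (ls', ss) \<longleftrightarrow> msize ls = msize ls' \<and>
           (\<forall>j<N. (\<Sum>k<length ls. displacement (res_ind N j) (ss ! k) (ls ! k))
                 = (\<Sum>k<length ls. displacement (res_ind N j) (ss ! k) (ls' ! k)))"
proof -
  define u where "u j = (\<Sum>k<length ls. int (res_count N (ss ! k) (ls ! k) j))" for j
  define v where "v j = (\<Sum>k<length ls. int (res_count N (ss ! k) (ls' ! k) j))" for j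
  have sums: "(\<Sum>j<N. u j) = int (msize ls)" "(\<Sum>j<N. v j) = int (msize ls')"
    unfolding u_def v_def msize_eq_sum len
    by (subst sum.swap, simp add: sum_res_count[OF N])+
  have diffs:
    "u j - u (Suc j mod N) = (\<Sum>k<length ls. displacement (res_ind N j) (ss ! k) (ls ! k))"
    "v j - v (Suc j mod N) = (\<Sum>k<length ls. displacement (res_ind N j) (ss ! k) (ls' ! k))"
    if "j < N" for j
    unfolding u_def v_def by (simp_all add: sum_subtractf[symmetric] res_count_diff[OF that])
  have "residues N (ls, ss) = residues N (ls', ss) \<longleftrightarrow> (\<forall>j<N. u j = v j)"
  proof -
    have "int (count (residues N (ls, ss)) (int j)) = u j"
      "int (count (residues N (ls', ss)) (int j)) = v j" for j
      by (simp_all add: u_def v_def count_residues len)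
    then have "(\<forall>j<N. u j = v j) \<longleftrightarrow> (\<forall>j<N. count (residues N (ls, ss)) (int j)
                                          = count (residues N (ls', ss)) (int j))"
      by (metis of_nat_eq_iff)
    also have "\<dots> \<longleftrightarrow> (\<forall>r. count (residues N (ls, ss)) r = count (residues N (ls', ss)) r)"
      using count_residues_out_of_range[OF N] by metis
    finally show ?thesis by (simp add: multiset_eq_iff)
  qed
  moreover have "(\<forall>j<N. u j = v j) \<longleftrightarrow> msize ls = msize ls' \<and>
           (\<forall>j<N. u j - u (Suc j mod N) = v j - v (Suc j mod N))"
  proof
    assume "\<forall>j<N. u j = v j"
    moreover then have "u (Suc j mod N) = v (Suc j mod N)" for j using N by simp
    ultimately show "msize ls = msize ls' \<and> (\<forall>j<N. u j - u (Suc j mod N) = v j - v (Suc j mod N))"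
      using sums by simp
  next
    assume "msize ls = msize ls' \<and> (\<forall>j<N. u j - u (Suc j mod N) = v j - v (Suc j mod N))"
    then show "\<forall>j<N. u j = v j"
      using sums eq_of_cyclic_differences[of u N v] by simp
  qed
  ultimately show ?thesis using diffs by (simp add: block_rel_def)
qed

section \<open>Uglov's map followed by eta transposes slices\<close>

definition beta_comp :: "nat list list \<times> int list \<Rightarrow> nat \<Rightarrow> int set" where
  "beta_comp c k = beta_set (snd c ! k) (fst c ! k)"

definition config_of :: "nat \<Rightarrow> (nat \<Rightarrow> int set) \<Rightarrow> nat list list \<times> int list" where
  "config_of m Z = (map (\<lambda>k. fst (from_beta (Z k))) [0..<m], map (\<lambda>k. snd (from_beta (Z k))) [0..<m])"

lemma config_of:
  assumes "\<And>k. k < m \<Longrightarrow> is_beta_set (Z k)"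
  shows "config_of m Z \<in> configm m" and "\<And>k. k < m \<Longrightarrow> beta_comp (config_of m Z) k = Z k"
  using from_beta[OF assms] by (auto simp: config_of_def configm_def beta_comp_def)

lemma configm_is_partition: "c \<in> configm m \<Longrightarrow> k < m \<Longrightarrow> is_partition (fst c ! k)"
  by (auto simp: configm_def)

lemma is_beta_set_beta_comp: "c \<in> configm m \<Longrightarrow> k < m \<Longrightarrow> is_beta_set (beta_comp c k)"
  by (simp add: beta_comp_def is_beta_set_beta_set configm_is_partition)

lemma configm_eqI:
  assumes c: "c \<in> configm m" and d: "d \<in> configm m"
      and eq: "\<And>k. k < m \<Longrightarrow> beta_comp c k = beta_comp d k"
  shows "c = d"
proof -
  have comp: "fst c ! k = fst d ! k \<and> snd c ! k = snd d ! k" if k: "k < m" for k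
    using beta_set_inject[OF configm_is_partition[OF c k] configm_is_partition[OF d k]] eq[OF k]
    by (auto simp: beta_comp_def)
  have "length (fst c) = m" "length (snd c) = m" "length (fst d) = m" "length (snd d) = m"
    using c d by (auto simp: configm_def)
  then have "fst c = fst d" "snd c = snd d"
    using comp by (auto intro: nth_equalityI)
  then show ?thesis by (simp add: prod_eq_iff)
qed

lemma eta_eq_config_of:
  "eta e p = config_of e (\<lambda>i. slice e i (beta_set (snd p) (fst p)))"
proof -
  have "{(b - int i) div int e | b. b \<in> B \<and> b mod int e = int i} = slice e i B"
    if "i < e" for i and B :: "int set"
  proof (intro set_eqI iffI)
    fix a assume "a \<in> slice e i B"
    then show "a \<in> {(b - int i) div int e | b. b \<in> B \<and> b mod int e = int i}"
      using that by (auto simp: slice_def intro!: exI[of _ "a * int e + int i"])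
  next
    fix a assume "a \<in> {(b - int i) div int e | b. b \<in> B \<and> b mod int e = int i}"
    then obtain b where b: "b \<in> B" "b mod int e = int i" "a = (b - int i) div int e" by blast
    have "b - int i = b div int e * int e" using div_mult_mod_eq[of b "int e"] b(2) by linarith
    then have "a = b div int e" using b(3) that by simp
    then show "a \<in> slice e i B" using b div_mult_mod_eq[of b "int e"] by (simp add: slice_def)
  qed
  then show ?thesis by (simp add: eta_def config_of_def Let_def)
qed

definition uglov_set :: "nat \<Rightarrow> nat \<Rightarrow> nat list list \<times> int list \<Rightarrow> int set" where
  "uglov_set e r c = (\<Union>k\<in>{1..r}. psi e r k ` beta_comp c (k - 1))"

lemma Uglov_eq_from_beta: "Uglov e r c = from_beta (uglov_set e r c)"
  by (simp add: Uglov_def uglov_set_def beta_comp_def)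

lemma psi_eq_iff:
  assumes i: "i < e" and j: "j < r" and k: "k \<in> {1..r}"
  shows "psi e r k b = (a * int r + int j) * int e + int i \<longleftrightarrow> b = a * int e + int i \<and> k = r - j"
proof
  assume eq: "psi e r k b = (a * int r + int j) * int e + int i"
  have bm: "0 \<le> b mod int e" "b mod int e < int e" using i by simp_all
  have ii: "0 \<le> int i" "int i < int e" using i by simp_all
  have "b mod int e = int i" and q: "(b div int e + 1) * int r - int k = a * int r + int j"
    using arg_cong[OF eq, of "\<lambda>x. x mod int e"] arg_cong[OF eq, of "\<lambda>x. x div int e"]
    by (simp_all only: psi_def div_mod_unique_int[OF bm] div_mod_unique_int[OF ii])
  have rk: "0 \<le> int r - int k" "int r - int k < int r" and jj: "0 \<le> int j" "int j < int r"
    using k j by auto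
  have eq': "(b div int e) * int r + (int r - int k) = a * int r + int j"
    using q by (simp add: algebra_simps)
  have "b div int e = a" "int r - int k = int j"
    using arg_cong[OF eq', of "\<lambda>x. x div int r"] arg_cong[OF eq', of "\<lambda>x. x mod int r"]
    by (simp_all only: div_mod_unique_int[OF rk] div_mod_unique_int[OF jj])
  then show "b = a * int e + int i \<and> k = r - j"
    using \<open>b mod int e = int i\<close> div_mult_mod_eq[of b "int e"] k by auto
qed (use i j k in \<open>simp add: psi_def algebra_simps of_nat_diff div_mod_slice_index\<close>)

lemma mem_uglov_set:
  "x \<in> uglov_set e r c \<longleftrightarrow> (\<exists>k\<in>{1..r}. \<exists>b\<in>beta_comp c (k - 1). psi e r k b = x)"
  unfolding uglov_set_def by blast

lemma slice_slice_uglov_set: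
  assumes "i < e" and "j < r"
  shows "slice r j (slice e i (uglov_set e r c)) = slice e i (beta_comp c (r - 1 - j))"
proof (intro set_eqI)
  fix a
  have "a \<in> slice r j (slice e i (uglov_set e r c))
      \<longleftrightarrow> (\<exists>k\<in>{1..r}. \<exists>b\<in>beta_comp c (k - 1). psi e r k b = (a * int r + int j) * int e + int i)"
    unfolding slice_def mem_Collect_eq mem_uglov_set by (simp add: algebra_simps)
  also have "\<dots> \<longleftrightarrow> (\<exists>k\<in>{1..r}. \<exists>b\<in>beta_comp c (k - 1). b = a * int e + int i \<and> k = r - j)"
    by (rule bex_cong[OF refl], rule bex_cong[OF refl], erule psi_eq_iff[OF assms])
  also have "\<dots> \<longleftrightarrow> a \<in> slice e i (beta_comp c (r - 1 - j))"
    using assms(2) by (auto simp: slice_def Suc_diff_Suc)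
  finally show "a \<in> slice r j (slice e i (uglov_set e r c)) \<longleftrightarrow> a \<in> slice e i (beta_comp c (r - 1 - j))" .
qed

definition transposed :: "nat \<Rightarrow> nat \<Rightarrow> (nat \<Rightarrow> int set) \<Rightarrow> (nat \<Rightarrow> int set) \<Rightarrow> bool" where
  "transposed e r Z T \<longleftrightarrow> (\<forall>i<e. \<forall>j<r. slice r j (T i) = slice e i (Z (r - 1 - j)))"

lemma eta_Uglov_transposed:
  assumes e: "0 < e" and r: "0 < r" and c: "c \<in> configm r"
  shows "eta e (Uglov e r c) \<in> configm e"
    and "transposed e r (beta_comp c) (beta_comp (eta e (Uglov e r c)))"
proof -
  let ?U = "uglov_set e r c"
  have slices: "is_beta_set (slice e i ?U)" if i: "i < e" for i
    unfolding is_beta_set_iff_slices[OF r, of "slice e i ?U"]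
  proof (intro allI impI)
    fix j assume "j < r"
    then have "is_beta_set (beta_comp c (r - 1 - j))" by (simp add: is_beta_set_beta_comp[OF c])
    then show "is_beta_set (slice r j (slice e i ?U))"
      using is_beta_set_iff_slices[OF e, of "beta_comp c (r - 1 - j)"] i \<open>j < r\<close>
      by (simp add: slice_slice_uglov_set)
  qed
  then have "is_beta_set ?U" using is_beta_set_iff_slices[OF e, of ?U] by blast
  then have eta: "eta e (Uglov e r c) = config_of e (\<lambda>i. slice e i ?U)"
    using from_beta(2) by (simp add: eta_eq_config_of Uglov_eq_from_beta)
  show "eta e (Uglov e r c) \<in> configm e"
    using config_of(1)[OF slices] by (simp add: eta)
  show "transposed e r (beta_comp c) (beta_comp (eta e (Uglov e r c)))"
    using config_of(2)[OF slices] by (simp add: eta transposed_def slice_slice_uglov_set)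
qed

lemma transposed_left_unique:
  assumes "0 < e" "transposed e r Z T" "transposed e r Z' T" "k < r"
  shows "Z k = Z' k"
proof (rule set_eq_by_slices[OF assms(1)])
  fix i assume "i < e"
  have "r - 1 - k < r" "r - 1 - (r - 1 - k) = k" using assms(4) by auto
  then show "slice e i (Z k) = slice e i (Z' k)"
    using assms(2,3) \<open>i < e\<close> unfolding transposed_def by metis
qed

lemma transposed_right_unique:
  assumes "0 < r" "transposed e r Z T" "transposed e r Z T'" "i < e"
  shows "T i = T' i"
  using assms unfolding transposed_def by (metis set_eq_by_slices)

lemma transposed_interleave:
  "transposed e r (\<lambda>k. interleave e (\<lambda>i. slice r (r - 1 - k) (T i))) T"
  unfolding transposed_def by (simp add: slice_interleave)

lemma eta_Uglov_inj:
  assumes e: "0 < e" and r: "0 < r" and c: "c \<in> configm r" and d: "d \<in> configm r"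
      and eq: "eta e (Uglov e r c) = eta e (Uglov e r d)"
  shows "c = d"
proof (rule configm_eqI[OF c d])
  fix k assume "k < r"
  then show "beta_comp c k = beta_comp d k"
    using transposed_left_unique[OF e eta_Uglov_transposed(2)[OF e r c]] eta_Uglov_transposed(2)[OF e r d]
    by (simp add: eq)
qed

lemma eta_Uglov_surj:
  assumes e: "0 < e" and r: "0 < r" and d: "d \<in> configm e"
  shows "\<exists>c\<in>configm r. eta e (Uglov e r c) = d"
proof -
  define Z where "Z k = interleave e (\<lambda>i. slice r (r - 1 - k) (beta_comp d i))" for k
  have "is_beta_set (Z k)" for k
    unfolding is_beta_set_iff_slices[OF e, of "Z k"]
  proof (intro allI impI)
    fix i assume "i < e"
    then show "is_beta_set (slice e i (Z k))"
      using is_beta_set_beta_comp[OF d] is_beta_set_iff_slices[OF r, of "beta_comp d i"] r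
      by (simp add: Z_def slice_interleave)
  qed
  then have c: "config_of r Z \<in> configm r" and comps: "\<And>k. k < r \<Longrightarrow> beta_comp (config_of r Z) k = Z k"
    using config_of[of r Z] by auto
  have "transposed e r (beta_comp (config_of r Z)) (beta_comp d)"
    using transposed_interleave[of e r "beta_comp d"] r comps unfolding transposed_def Z_def by simp
  then have "beta_comp (eta e (Uglov e r (config_of r Z))) i = beta_comp d i" if "i < e" for i
    using transposed_right_unique[OF r eta_Uglov_transposed(2)[OF e r c] _ that] by blast
  then have "eta e (Uglov e r (config_of r Z)) = d"
    by (rule configm_eqI[OF eta_Uglov_transposed(1)[OF e r c] d])
  then show ?thesis using c by blast
qed

section \<open>Moments under transposition\<close>

lemma transposed_is_beta_set:
  assumes r: "0 < r" and tr: "transposed e r Z T" and Z: "\<And>k. k < r \<Longrightarrow> is_beta_set (Z k)"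
      and i: "i < e"
  shows "is_beta_set (T i)"
  unfolding is_beta_set_iff_slices[OF r, of "T i"]
proof (intro allI impI)
  fix j assume "j < r"
  then have "is_beta_set (Z (r - 1 - j))" by (intro Z) simp
  then show "is_beta_set (slice r j (T i))"
    using tr i \<open>j < r\<close> is_beta_set_iff_slices[of e "Z (r - 1 - j)"] unfolding transposed_def
    by simp
qed

lemma transposed_sum_slices:
  assumes "transposed e r Z T" and "i < e"
  shows "(\<Sum>k<r. g (slice e i (Z k))) = (\<Sum>j<r. g (slice r j (T i)))"
proof -
  have "(\<Sum>j<r. g (slice r j (T i))) = (\<Sum>j<r. g (slice e i (Z (r - 1 - j))))"
    using assms unfolding transposed_def by simp
  also have "\<dots> = (\<Sum>k<r. g (slice e i (Z k)))"
    by (rule sum.reindex_bij_witness[where i = "\<lambda>k. r - 1 - k" and j = "\<lambda>k. r - 1 - k"]) auto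
  finally show ?thesis by simp
qed

lemma sum_moment_id_by_slices:
  assumes N: "0 < N" and Z: "\<And>k. k < m \<Longrightarrow> is_beta_set (Z k)"
  shows "(\<Sum>k<m. moment (\<lambda>x. x) (Z k))
       = int N * (\<Sum>k<m. \<Sum>i<N. moment (\<lambda>x. x) (slice N i (Z k)))
         + (\<Sum>i<N. int i * (\<Sum>k<m. charge (slice N i (Z k))))"
proof -
  have "moment (\<lambda>x. x) (Z k) = (\<Sum>i<N. int N * moment (\<lambda>x. x) (slice N i (Z k))
                                     + int i * charge (slice N i (Z k)))" if k: "k < m" for k
  proof -
    have "moment (\<lambda>x. x) (Z k) = (\<Sum>i<N. moment (\<lambda>a. int N * a + int i) (slice N i (Z k)))"
      using moment_slices[OF N Z[OF k], of "\<lambda>x. x"] by (simp add: mult.commute)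
    also have "\<dots> = (\<Sum>i<N. int N * moment (\<lambda>x. x) (slice N i (Z k))
                                     + int i * charge (slice N i (Z k)))"
      using Z[OF k] is_beta_set_iff_slices[OF N, of "Z k"] by (simp add: moment_affine)
    finally show ?thesis .
  qed
  then have "(\<Sum>k<m. moment (\<lambda>x. x) (Z k))
      = (\<Sum>k<m. \<Sum>i<N. int N * moment (\<lambda>x. x) (slice N i (Z k))
                         + int i * charge (slice N i (Z k)))"
    by simp
  also have "\<dots> = int N * (\<Sum>k<m. \<Sum>i<N. moment (\<lambda>x. x) (slice N i (Z k)))
         + (\<Sum>k<m. \<Sum>i<N. int i * charge (slice N i (Z k)))"
    by (simp add: sum.distrib sum_distrib_left)
  also have "(\<Sum>k<m. \<Sum>i<N. int i * charge (slice N i (Z k)))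
           = (\<Sum>i<N. int i * (\<Sum>k<m. charge (slice N i (Z k))))"
    by (subst sum.swap) (simp add: sum_distrib_left)
  finally show ?thesis .
qed

context
  fixes e r :: nat and Z T :: "nat \<Rightarrow> int set"
  assumes e: "0 < e" and r: "0 < r" and tr: "transposed e r Z T"
      and Z: "\<And>k. k < r \<Longrightarrow> is_beta_set (Z k)"
begin

lemma transposed_charge_left:
  assumes i: "i < e"
  shows "(\<Sum>k<r. charge (slice e i (Z k))) = charge (T i)"
  using transposed_sum_slices[OF tr i] moment_slices[OF r transposed_is_beta_set[OF r tr Z i]]
  by simp

lemma transposed_charge_right:
  assumes j: "j < r"
  shows "(\<Sum>i<e. charge (slice r j (T i))) = charge (Z (r - 1 - j))"
proof -
  have "is_beta_set (Z (r - 1 - j))" using r by (intro Z) simp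
  then show ?thesis
    using tr j moment_slices[OF e, of "Z (r - 1 - j)" "\<lambda>_. 1"] unfolding transposed_def by simp
qed

lemma transposed_moment_res_left:
  "i < e \<Longrightarrow> (\<Sum>k<r. moment (res_ind e i) (Z k)) = charge (T i)"
  using transposed_charge_left Z by (simp add: moment_res_ind)

lemma transposed_moment_res_right:
  assumes "j < r"
  shows "(\<Sum>i<e. moment (res_ind r j) (T i)) = charge (Z (r - 1 - j))"
  using transposed_charge_right[OF assms] transposed_is_beta_set[OF r tr Z] assms
  by (simp add: moment_res_ind)

lemma transposed_moment_id:
  "int r * (\<Sum>k<r. moment (\<lambda>x. x) (Z k)) - int e * (\<Sum>i<e. moment (\<lambda>x. x) (T i))
     = int r * (\<Sum>i<e. int i * charge (T i))
       - int e * (\<Sum>k<r. int (r - 1 - k) * charge (Z k))"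
proof -
  define L where "L = (\<Sum>k<r. \<Sum>i<e. moment (\<lambda>x. x) (slice e i (Z k)))"
  have left: "(\<Sum>k<r. moment (\<lambda>x. x) (Z k)) = int e * L + (\<Sum>i<e. int i * charge (T i))"
    using sum_moment_id_by_slices[where m = r and Z = Z, OF e Z] by (simp add: L_def transposed_charge_left)
  have "(\<Sum>i<e. \<Sum>j<r. moment (\<lambda>x. x) (slice r j (T i))) = L"
    unfolding L_def by (subst sum.swap) (simp add: transposed_sum_slices[OF tr])
  moreover have "(\<Sum>j<r. int j * charge (Z (r - 1 - j)))
      = (\<Sum>k<r. int (r - 1 - k) * charge (Z k))"
    by (rule sum.reindex_bij_witness[where i = "\<lambda>k. r - 1 - k" and j = "\<lambda>k. r - 1 - k"]) auto
  ultimately have right: "(\<Sum>i<e. moment (\<lambda>x. x) (T i))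
      = int r * L + (\<Sum>k<r. int (r - 1 - k) * charge (Z k))"
    using sum_moment_id_by_slices[where m = e and Z = T, OF r transposed_is_beta_set[OF r tr Z]]
    by (simp add: transposed_charge_right)
  show ?thesis unfolding left right by (simp add: algebra_simps)
qed

end

lemma transposed_moment_conditions_iff:
  assumes e: "0 < e" and r: "0 < r"
      and tr: "transposed e r Z T" and tr': "transposed e r Z' T'"
      and Z: "\<And>k. k < r \<Longrightarrow> is_beta_set (Z k)" and Z': "\<And>k. k < r \<Longrightarrow> is_beta_set (Z' k)"
  shows "(\<forall>k<r. charge (Z k) = charge (Z' k))
         \<and> (\<Sum>k<r. moment (\<lambda>x. x) (Z k)) = (\<Sum>k<r. moment (\<lambda>x. x) (Z' k))
         \<and> (\<forall>i<e. (\<Sum>k<r. moment (res_ind e i) (Z k)) = (\<Sum>k<r. moment (res_ind e i) (Z' k)))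
     \<longleftrightarrow> (\<forall>i<e. charge (T i) = charge (T' i))
         \<and> (\<Sum>i<e. moment (\<lambda>x. x) (T i)) = (\<Sum>i<e. moment (\<lambda>x. x) (T' i))
         \<and> (\<forall>j<r. (\<Sum>i<e. moment (res_ind r j) (T i)) = (\<Sum>i<e. moment (res_ind r j) (T' i)))"
  (is "?chargeZ \<and> ?sizeZ \<and> ?resZ \<longleftrightarrow> ?chargeT \<and> ?sizeT \<and> ?resT")
proof -
  have "?resZ \<longleftrightarrow> ?chargeT"
    by (simp add: transposed_moment_res_left[OF e r tr Z] transposed_moment_res_left[OF e r tr' Z'])
  moreover have "?resT \<longleftrightarrow> ?chargeZ"
  proof -
    have "?resT \<longleftrightarrow> (\<forall>j<r. charge (Z (r - 1 - j)) = charge (Z' (r - 1 - j)))"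
      by (simp add: transposed_moment_res_right[OF e r tr Z] transposed_moment_res_right[OF e r tr' Z'])
    also have "\<dots> \<longleftrightarrow> ?chargeZ"
    proof
      assume reflected: "\<forall>j<r. charge (Z (r - 1 - j)) = charge (Z' (r - 1 - j))"
      show ?chargeZ
      proof (intro allI impI)
        fix k assume "k < r"
        then show "charge (Z k) = charge (Z' k)"
          using reflected[rule_format, of "r - 1 - k"] by simp
      qed
    qed simp
    finally show ?thesis .
  qed
  moreover have "?sizeZ \<longleftrightarrow> ?sizeT" if ?chargeZ ?chargeT
  proof -
    have "(\<Sum>i<e. int i * charge (T i)) = (\<Sum>i<e. int i * charge (T' i))"
      "(\<Sum>k<r. int (r - 1 - k) * charge (Z k)) = (\<Sum>k<r. int (r - 1 - k) * charge (Z' k))"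
      using that by simp_all
    then have "int r * ((\<Sum>k<r. moment (\<lambda>x. x) (Z k)) - (\<Sum>k<r. moment (\<lambda>x. x) (Z' k)))
             = int e * ((\<Sum>i<e. moment (\<lambda>x. x) (T i)) - (\<Sum>i<e. moment (\<lambda>x. x) (T' i)))"
      using transposed_moment_id[OF e r tr Z] transposed_moment_id[OF e r tr' Z']
      by (simp add: algebra_simps)
    then show ?thesis using e r by auto
  qed
  ultimately show ?thesis by blast
qed

lemma block_rel_iff_moments:
  assumes N: "0 < N" and c: "c \<in> configm m" and d: "d \<in> configm m"
  shows "block_rel N c d \<longleftrightarrow>
           (\<forall>k<m. charge (beta_comp c k) = charge (beta_comp d k))
         \<and> (\<Sum>k<m. moment (\<lambda>x. x) (beta_comp c k)) = (\<Sum>k<m. moment (\<lambda>x. x) (beta_comp d k))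
         \<and> (\<forall>j<N. (\<Sum>k<m. moment (res_ind N j) (beta_comp c k))
                 = (\<Sum>k<m. moment (res_ind N j) (beta_comp d k)))"
proof -
  obtain ls ss ls' ss' where cd: "c = (ls, ss)" "d = (ls', ss')" by fastforce
  have len: "length ls = m" "length ss = m" "length ls' = m" "length ss' = m"
    using c d cd by (auto simp: configm_def)
  have px: "is_partition (ls ! k)" "is_partition (ls' ! k)" if "k < m" for k
    using configm_is_partition[OF c that] configm_is_partition[OF d that] cd by auto
  have "(\<forall>k<m. charge (beta_comp c k) = charge (beta_comp d k)) \<longleftrightarrow> ss = ss'"
    using len px cd by (auto simp: beta_comp_def moment_one_beta_set intro: nth_equalityI)
  moreover have "(\<Sum>k<m. moment f (beta_comp c k)) = (\<Sum>k<m. moment f (beta_comp d k))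
      \<longleftrightarrow> (\<Sum>k<m. displacement f (ss ! k) (ls ! k)) = (\<Sum>k<m. displacement f (ss ! k) (ls' ! k))"
    if "ss = ss'" for f
    using px cd that by (simp add: beta_comp_def moment_beta_set sum.distrib)
  moreover have "msize ls = msize ls'
      \<longleftrightarrow> (\<Sum>k<m. displacement (\<lambda>x. x) (ss ! k) (ls ! k)) = (\<Sum>k<m. displacement (\<lambda>x. x) (ss ! k) (ls' ! k))"
    using msize_eq_sum[of ls] msize_eq_sum[of ls'] len by (simp add: displacement_id) (metis of_nat_eq_iff)
  ultimately show ?thesis
    using block_rel_iff_displacements[OF N, of ls ls' ss] len cd by (auto simp: block_rel_def)
qed

lemma block_rel_eta_Uglov_iff:
  assumes e: "0 < e" and r: "0 < r" and c: "c \<in> configm r" and d: "d \<in> configm r"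
  shows "block_rel e c d \<longleftrightarrow> block_rel r (eta e (Uglov e r c)) (eta e (Uglov e r d))"
  unfolding block_rel_iff_moments[OF e c d]
    block_rel_iff_moments[OF r eta_Uglov_transposed(1)[OF e r c] eta_Uglov_transposed(1)[OF e r d]]
  by (rule transposed_moment_conditions_iff[OF e r eta_Uglov_transposed(2)[OF e r c]
        eta_Uglov_transposed(2)[OF e r d]]) (simp_all add: is_beta_set_beta_comp[OF c] is_beta_set_beta_comp[OF d])

theorem corollary2p14:
  fixes e r :: nat and c :: "nat list list \<times> int list"
  assumes "2 \<le> e" and "2 \<le> r" and "c \<in> configm r"
  shows "bij_betw (eta e \<circ> Uglov e r) (block e r c) (block r e (eta e (Uglov e r c)))"
proof -
  have e: "0 < e" and r: "0 < r" using assms(1,2) by simp_all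
  have "inj_on (eta e \<circ> Uglov e r) (block e r c)"
    using eta_Uglov_inj[OF e r] by (intro inj_onI) (simp add: block_def)
  moreover have "(eta e \<circ> Uglov e r) ` block e r c = block r e (eta e (Uglov e r c))"
  proof (intro set_eqI iffI)
    fix y assume "y \<in> (eta e \<circ> Uglov e r) ` block e r c"
    then show "y \<in> block r e (eta e (Uglov e r c))"
      using block_rel_eta_Uglov_iff[OF e r assms(3)] eta_Uglov_transposed(1)[OF e r]
      by (auto simp: block_def)
  next
    fix y assume y: "y \<in> block r e (eta e (Uglov e r c))"
    then obtain d where d: "d \<in> configm r" "eta e (Uglov e r d) = y"
      using eta_Uglov_surj[OF e r, of y] by (auto simp: block_def)
    then have "d \<in> block e r c"
      using y block_rel_eta_Uglov_iff[OF e r assms(3) d(1)] by (simp add: block_def)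
    then show "y \<in> (eta e \<circ> Uglov e r) ` block e r c" using d(2) by force
  qed
  ultimately show ?thesis by (simp add: bij_betw_def)
qed

end
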